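(* Let $(a_m)_{m\ge1}$ be defined by $a_1=2$ and $a_{m+1}=a_m+1/a_m$, so that $[-a_m,a_m]$ is the support of the $m$-fold monotone convolution of the standard semicircle law. Then for every $m\ge3$ $$\sqrt{m+\sqrt{m(m+1)}}\;\le\; a_m\;\le\;\sqrt{2m+\sqrt{2m}}.$$
   Context: The standard semicircle law is $\frac1{2\pi}\sqrt{4-x^2}\mathbf 1_{[-2,2]}dx$; monotone convolution $\mu\rhd\nu$ is the probability measure $\rho$ with $H_\rho=H_\mu\circ H_\nu$ where $H_\mu=1/\mathcal G_\mu$ and $\mathcal G_\mu(z)=\int\frac{\mu(dx)}{z-x}$. *)

theory Defs
  imports Complex_Main
begin

text \<open>The sequence a_m (m \<ge> 1): a_1 = 2, a_(m+1) = a_m + 1/a_m.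
  The value at index 0 is an unused placeholder.\<close>
fun a_seq :: "nat \<Rightarrow> real" where
  "a_seq 0 = 0"
| "a_seq (Suc 0) = 2"
| "a_seq (Suc (Suc n)) = a_seq (Suc n) + 1 / a_seq (Suc n)"

end

theory Submission imports Defs begin

text \<open>The squares \<open>b\<^sub>m = a\<^sub>m\<^sup>2\<close> satisfy \<open>b\<^sub>m\<^sub>+\<^sub>1 = b\<^sub>m + 2 + 1/b\<^sub>m\<close>, and \<open>b \<mapsto> b + 2 + 1/b\<close> is
  increasing on \<open>[1,\<infinity>)\<close>. Hence it suffices to check that the lower envelope \<open>m + \<surd>(m(m+1))\<close>
  and the upper envelope \<open>2m + \<surd>(2m)\<close> are mapped below, respectively above, their values at
  \<open>m + 1\<close>; both are elementary square-root estimates, and the induction starts at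
  \<open>a\<^sub>3 = 29/10\<close>.\<close>

lemma a_seq_Suc_eq: "n \<ge> 1 \<Longrightarrow> a_seq (Suc n) = a_seq n + 1 / a_seq n"
  by (cases n) auto

lemma a_seq_ge_two: "n \<ge> 1 \<Longrightarrow> a_seq n \<ge> 2"
proof (induction n rule: nat_induct_at_least)
  case base
  then show ?case by simp
next
  case (Suc n)
  then have "1 / a_seq n \<ge> 0" by simp
  with Suc show ?case unfolding a_seq_Suc_eq[OF Suc.hyps] by linarith
qed

lemma a_seq_Suc_squared:
  assumes "n \<ge> 1"
  shows "(a_seq (Suc n))\<^sup>2 = (a_seq n)\<^sup>2 + 2 + 1 / (a_seq n)\<^sup>2"
proof -
  have "a_seq n \<noteq> 0" using a_seq_ge_two[OF assms] by simp
  then show ?thesis using a_seq_Suc_eq[OF assms] by (simp add: power2_eq_square field_simps)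
qed

lemma add_inverse_mono:
  fixes b c :: real
  assumes "1 \<le> b" "b \<le> c"
  shows "b + 1 / b \<le> c + 1 / c"
proof -
  have "c + 1 / c - (b + 1 / b) = (c - b) * (1 - 1 / (c * b))"
    using assms by (simp add: field_simps)
  moreover have "1 \<le> c * b" using assms mult_mono[of 1 c 1 b] by simp
  then have "(c - b) * (1 - 1 / (c * b)) \<ge> 0" using assms by simp
  ultimately show ?thesis by linarith
qed

lemma add_inverse_le_sqrt_square_add_two:
  fixes x :: real
  assumes "x \<ge> 1"
  shows "x + 1 / (x\<^sup>2 + x) \<le> sqrt (x\<^sup>2 + 2)"
proof (rule real_le_rsqrt)
  have "x\<^sup>2 + x = x * (x + 1)" "x \<noteq> 0" "x + 1 \<noteq> 0"
    using assms by (auto simp: power2_eq_square algebra_simps)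
  then have "2 * x * (1 / (x\<^sup>2 + x)) = 2 / (x + 1)" by simp
  then have "(x + 1 / (x\<^sup>2 + x))\<^sup>2 = x\<^sup>2 + 2 / (x + 1) + (1 / (x\<^sup>2 + x))\<^sup>2"
    by (simp add: power2_sum)
  moreover have "2 / (x + 1) \<le> 1" using assms by simp
  moreover have "x\<^sup>2 + x \<ge> 1" using assms by (simp add: add_increasing)
  then have "(1 / (x\<^sup>2 + x))\<^sup>2 \<le> 1" by (intro power_le_one) auto
  ultimately show "(x + 1 / (x\<^sup>2 + x))\<^sup>2 \<le> x\<^sup>2 + 2" by linarith
qed

lemma upper_envelope_step:
  fixes r :: real
  assumes "r \<ge> 1/2"
  shows "(2 * r + sqrt (2 * r)) + 2 + 1 / (2 * r + sqrt (2 * r))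
    \<le> 2 * (r + 1) + sqrt (2 * (r + 1))"
proof -
  define x where "x = sqrt (2 * r)"
  have "x \<ge> 1" "x\<^sup>2 = 2 * r" using assms by (auto simp: x_def)
  with add_inverse_le_sqrt_square_add_two[of x] show ?thesis
    unfolding x_def[symmetric] by (simp add: algebra_simps)
qed

lemma lower_envelope_step:
  fixes r :: real
  assumes "r > 0"
  shows "(r + 1) + sqrt ((r + 1) * (r + 2))
    \<le> (r + sqrt (r * (r + 1))) + 2 + 1 / (r + sqrt (r * (r + 1)))"
proof -
  define s where "s = sqrt (r * (r + 1))"
  have s: "s \<ge> 0" "s\<^sup>2 = r * (r + 1)" using assms by (auto simp: s_def)
  have rs: "r + s > 0" using assms s by simp
  \<comment> \<open>\<open>(r + 1/2)\<^sup>2 - s\<^sup>2 = 1/4\<close> makes the defect \<open>r + 1/2 - s\<close> at most \<open>1/(4(r + s))\<close>.\<close>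
  have "(r + 1/2 - s) * (r + 1/2 + s) = 1/4"
    using s by (simp add: algebra_simps power2_eq_square)
  then have "r + 1/2 - s = 1 / (4 * (r + 1/2 + s))"
    using rs by (simp add: field_simps)
  also have "\<dots> \<le> 1 / (4 * (r + s))" using rs by (simp add: frac_le)
  also have "\<dots> \<le> (s + 1) / (r + s)" using rs s by (simp add: frac_le)
  finally have defect: "r + 1/2 - s \<le> (s + 1) / (r + s)" .
  have "(s + 1 + 1 / (r + s))\<^sup>2 = (s + 1)\<^sup>2 + (1 / (r + s))\<^sup>2 + 2 * (s + 1) * (1 / (r + s))"
    by (rule power2_sum)
  also have "\<dots> = s\<^sup>2 + 2 * s + 1 + 2 * ((s + 1) / (r + s)) + (1 / (r + s))\<^sup>2"
    by (simp add: power2_sum)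
  moreover have "(r + 1) * (r + 2) = s\<^sup>2 + 2 * r + 2" using s(2) by (simp add: algebra_simps)
  ultimately have "(r + 1) * (r + 2) \<le> (s + 1 + 1 / (r + s))\<^sup>2"
    using defect zero_le_power2[of "1 / (r + s)"] by linarith
  then have "sqrt ((r + 1) * (r + 2)) \<le> s + 1 + 1 / (r + s)"
    using rs s by (intro real_le_lsqrt) auto
  then show ?thesis by (simp add: s_def[symmetric])
qed

lemma a_seq_squared_bounds:
  "m \<ge> 3 \<Longrightarrow> real m + sqrt (real m * (real m + 1)) \<le> (a_seq m)\<^sup>2
    \<and> (a_seq m)\<^sup>2 \<le> 2 * real m + sqrt (2 * real m)"
proof (induction m rule: nat_induct_at_least)
  case base
  have a3: "a_seq 3 = 29/10" by (simp add: numeral_3_eq_3)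
  have "sqrt 12 \<le> 4" by (rule real_le_lsqrt) simp_all
  moreover have "2.41 \<le> sqrt (6::real)" by (rule real_le_rsqrt) (simp add: power2_eq_square)
  ultimately show ?case unfolding a3 by (simp add: power2_eq_square)
next
  case (Suc n)
  define f :: "real \<Rightarrow> real" where "f b = b + 2 + 1 / b" for b
  have f_mono: "f b \<le> f c" if "1 \<le> b" "b \<le> c" for b c
    using add_inverse_mono[OF that] by (simp add: f_def)
  have n: "real n \<ge> 1" using Suc by simp
  have step: "(a_seq (Suc n))\<^sup>2 = f ((a_seq n)\<^sup>2)"
    using a_seq_Suc_squared Suc by (simp add: f_def)
  have "real (Suc n) + sqrt (real (Suc n) * (real (Suc n) + 1))
      \<le> f (real n + sqrt (real n * (real n + 1)))"
    using lower_envelope_step[of "real n"] n by (simp add: f_def add_ac)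
  also have "\<dots> \<le> (a_seq (Suc n))\<^sup>2"
    unfolding step using Suc n by (intro f_mono) (auto intro: add_increasing2)
  finally have lower:
    "real (Suc n) + sqrt (real (Suc n) * (real (Suc n) + 1)) \<le> (a_seq (Suc n))\<^sup>2" .
  have "(a_seq (Suc n))\<^sup>2 \<le> f (2 * real n + sqrt (2 * real n))"
    unfolding step using Suc n a_seq_ge_two[of n] power_mono[of 1 "a_seq n" 2]
    by (intro f_mono) auto
  also have "\<dots> \<le> 2 * real (Suc n) + sqrt (2 * real (Suc n))"
    using upper_envelope_step[of "real n"] n by (simp add: f_def add_ac)
  finally show ?case using lower by simp
qed

theorem theorem3p10:
  fixes m :: nat
  assumes "m \<ge> 3"
  shows "sqrt (real m + sqrt (real m * (real m + 1))) \<le> a_seq m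
       \<and> a_seq m \<le> sqrt (2 * real m + sqrt (2 * real m))"
proof -
  have "a_seq m \<ge> 0" using a_seq_ge_two[of m] assms by simp
  moreover note a_seq_squared_bounds[OF assms]
  ultimately show ?thesis by (auto intro: real_le_rsqrt real_le_lsqrt)
qed

end
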